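(* Let $F$ be a field of characteristic zero and let $\mathcal{Q}$ be the additive group of rational numbers. Then the only Schur rings over $\mathcal{Q}$ are the group ring $F[\mathcal{Q}]$ and the symmetric Schur ring $F[\mathcal{Q}]^{\pm}$.
   Context: For finite $C\subseteq G$, $\overline{C}=\sum_{g\in C}g\in F[G]$ and $C^*=\{g^{-1}\mid g\in C\}$. A Schur ring over a group $G$ is an $F$-subspace $\mathfrak{S}=\operatorname{Span}_F\{\overline{C}\mid C\in\mathcal{D}(\mathfrak{S})\}$ of $F[G]$ where $\mathcal{D}(\mathfrak{S})$ is a partition of $G$ into finite sets such that (i) $\{1\}\in\mathcal{D}(\mathfrak{S})$; (ii) $C\in\mathcal{D}(\mathfrak{S})\Rightarrow C^*\in\mathcal{D}(\mathfrak{S})$; (iii) for all $C,D\in\mathcal{D}(\mathfrak{S})$, $\overline{C}\,\overline{D}=\sum_{E}\lambda_{CDE}\overline{E}$ with finitely many nonzero $\lambda_{CDE}\in F$. The group ring $F[G]$ is the Schur ring with partition into singletons; for abelian $G$, the symmetric Schur ring $F[G]^{\pm}$ is the Schur ring with partition $\{\{g,g^{-1}\}\mid g\in G\}$. *)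

theory Defs
  imports Main "HOL.Rat"
begin

text \<open>The group algebra F[Q] over the additive group of rationals is modelled as
  finitely supported functions rat => F; multiplication is convolution.\<close>

definition group_ring :: "(rat \<Rightarrow> 'f::field) set" where
  "group_ring = {f. finite {x. f x \<noteq> 0}}"

definition conv :: "(rat \<Rightarrow> 'f::field) \<Rightarrow> (rat \<Rightarrow> 'f) \<Rightarrow> rat \<Rightarrow> 'f" where
  "conv f g = (\<lambda>x. \<Sum>y\<in>{y. f y \<noteq> 0}. f y * g (x - y))"

text \<open>The class sum of a finite set C, as an element of F[Q].\<close>
definition cls :: "rat set \<Rightarrow> rat \<Rightarrow> 'f::field" where
  "cls C = (\<lambda>x. if x \<in> C then 1 else 0)"

definition lincomb :: "rat set set \<Rightarrow> (rat \<Rightarrow> 'f::field) set" where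
  "lincomb D = {f. \<exists>T c. finite T \<and> T \<subseteq> D \<and> f = (\<lambda>x. \<Sum>E\<in>T. c E * cls E x)}"

definition finite_partition :: "rat set set \<Rightarrow> bool" where
  "finite_partition D \<longleftrightarrow>
     (\<forall>C\<in>D. C \<noteq> {} \<and> finite C) \<and>
     (\<forall>C\<in>D. \<forall>C'\<in>D. C \<noteq> C' \<longrightarrow> C \<inter> C' = {}) \<and>
     \<Union>D = UNIV"

definition schur_partition :: "'f::field itself \<Rightarrow> rat set set \<Rightarrow> bool" where
  "schur_partition TYPE('f) D \<longleftrightarrow>
     finite_partition D \<and>
     {0} \<in> D \<and>
     (\<forall>C\<in>D. uminus ` C \<in> D) \<and>
     (\<forall>C\<in>D. \<forall>C'\<in>D. \<exists>T (lam :: rat set \<Rightarrow> 'f). finite T \<and> T \<subseteq> D \<and>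
        conv (cls C) (cls C') = (\<lambda>x. \<Sum>E\<in>T. lam E * cls E x))"

definition schur_ring :: "(rat \<Rightarrow> 'f::field) set \<Rightarrow> bool" where
  "schur_ring S \<longleftrightarrow> (\<exists>D. schur_partition TYPE('f) D \<and> S = lincomb D)"

definition sym_schur_ring :: "(rat \<Rightarrow> 'f::field) set" where
  "sym_schur_ring = lincomb {{g, - g} | g. True}"

end

theory Submission
  imports Defs
begin

text \<open>
  Let \<open>C\<close> be a block with largest element \<open>m\<close> and let \<open>k > 0\<close>. The coefficient of \<open>k m\<close> in the
  \<open>k\<close>-th power of the class sum of \<open>C\<close> is 1, and a coefficient 1 only occurs at points \<open>k c\<close> with
  \<open>c \<in> C\<close>, because a unique representation as a sum of \<open>k\<close> elements of \<open>C\<close> is invariant under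
  rotation. Coefficients are constant on blocks, and in characteristic zero they may be compared
  as natural numbers; so the block \<open>E\<close> of \<open>k m\<close> lies in \<open>k C\<close>. Counting the coefficients over
  \<open>E\<close> through the product with the class sum of \<open>-E\<close> gives \<open>|E| \<ge> |C|\<close>, hence \<open>E = k C\<close>.
  Together with \<open>-1\<close> and the partition property this makes every nonzero rational \<open>q\<close> a
  multiplier: \<open>q C\<close> is again a block. The block \<open>B\<close> of 1 is then closed under multiplication by
  each of its elements and is finite, so \<open>B \<subseteq> {1, -1}\<close>; and every block is of the form \<open>x B\<close>.
\<close>

definition block_of :: "rat set set \<Rightarrow> rat \<Rightarrow> rat set" where
  "block_of D x = (THE C. C \<in> D \<and> x \<in> C)"

lemma finite_partitionD:
  assumes "finite_partition D" "C \<in> D"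
  shows "finite C" "C \<noteq> {}"
  using assms unfolding finite_partition_def by auto

lemma finite_partition_block_eq:
  assumes "finite_partition D" "C \<in> D" "C' \<in> D" "x \<in> C" "x \<in> C'"
  shows "C = C'"
  using assms unfolding finite_partition_def by blast

lemma
  assumes "finite_partition D"
  shows block_of_in: "block_of D x \<in> D" and mem_block_of: "x \<in> block_of D x"
proof -
  obtain C where C: "C \<in> D" "x \<in> C"
    using assms unfolding finite_partition_def by blast
  have "block_of D x = C"
    unfolding block_of_def
  proof (rule the_equality)
    fix C' assume "C' \<in> D \<and> x \<in> C'"
    then show "C' = C" using finite_partition_block_eq[OF assms _ C(1)] C(2) by blast
  qed (use C in blast)
  then show "block_of D x \<in> D" "x \<in> block_of D x" using C by simp_all
qed

lemma block_of_eq: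
  assumes "finite_partition D" "C \<in> D" "x \<in> C"
  shows "block_of D x = C"
  using finite_partition_block_eq[OF assms(1) block_of_in[OF assms(1)] assms(2)]
    mem_block_of[OF assms(1)] assms(3) by blast

lemma finite_partition_eq_range_block_of:
  assumes "finite_partition D"
  shows "D = range (block_of D)"
proof
  show "D \<subseteq> range (block_of D)"
  proof
    fix C assume "C \<in> D"
    then obtain x where "x \<in> C" using finite_partitionD(2)[OF assms] by blast
    then show "C \<in> range (block_of D)" using block_of_eq[OF assms \<open>C \<in> D\<close>] by blast
  qed
qed (use block_of_in[OF assms] in blast)

definition block_constant :: "rat set set \<Rightarrow> (rat \<Rightarrow> 'a) \<Rightarrow> bool" where
  "block_constant D f \<longleftrightarrow> (\<forall>C\<in>D. \<forall>x\<in>C. \<forall>y\<in>C. f x = f y)"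

lemma block_constant_cls:
  assumes "finite_partition D" "E \<in> D"
  shows "block_constant D (cls E)"
  unfolding block_constant_def
proof (intro ballI)
  fix C x y assume xy: "C \<in> D" "x \<in> C" "y \<in> C"
  then have "x \<in> E \<longleftrightarrow> y \<in> E"
    using finite_partition_block_eq[OF assms(1) xy(1) assms(2)] by blast
  then show "cls E x = cls E y" unfolding cls_def by simp
qed

lemma block_constant_sum:
  assumes "\<And>E. E \<in> T \<Longrightarrow> block_constant D (f E)"
  shows "block_constant D (\<lambda>x. \<Sum>E\<in>T. c E * f E x)"
  unfolding block_constant_def
proof (intro ballI)
  fix C x y assume "C \<in> D" "x \<in> C" "y \<in> C"
  then have "f E x = f E y" if "E \<in> T" for E
    using assms[OF that] unfolding block_constant_def by blast
  then show "(\<Sum>E\<in>T. c E * f E x) = (\<Sum>E\<in>T. c E * f E y)" by simp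
qed

lemma lincomb_imp_block_constant:
  assumes "finite_partition D" "f \<in> lincomb D"
  shows "block_constant D f"
proof -
  obtain T c where T: "T \<subseteq> D" and f: "f = (\<lambda>x. \<Sum>E\<in>T. c E * cls E x)"
    using assms(2) unfolding lincomb_def by blast
  show ?thesis
    unfolding f by (rule block_constant_sum, rule block_constant_cls[OF assms(1)]) (use T in blast)
qed

lemma lincomb_imp_finite_support:
  assumes "finite_partition D" "f \<in> lincomb D"
  shows "finite {x. f x \<noteq> 0}"
proof -
  obtain T c where T: "finite T" "T \<subseteq> D" and f: "f = (\<lambda>x. \<Sum>E\<in>T. c E * cls E x)"
    using assms(2) unfolding lincomb_def by blast
  have "{x. f x \<noteq> 0} \<subseteq> \<Union>T"
  proof
    fix x assume "x \<in> {x. f x \<noteq> 0}"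
    then obtain E where "E \<in> T" "c E * cls E x \<noteq> 0"
      unfolding f by (auto elim: sum.not_neutral_contains_not_neutral)
    then show "x \<in> \<Union>T" by (auto simp: cls_def split: if_splits)
  qed
  moreover have "finite (\<Union>T)"
    using T finite_partitionD(1)[OF assms(1)] by blast
  ultimately show ?thesis by (rule finite_subset)
qed

lemma lincomb_if_block_constant:
  fixes f :: "rat \<Rightarrow> 'f::field"
  assumes fp: "finite_partition D" and supp: "finite {x. f x \<noteq> 0}"
    and bc: "block_constant D f"
  shows "f \<in> lincomb D"
proof -
  define T where "T = block_of D ` {x. f x \<noteq> 0}"
  define c where "c E = f (SOME x. x \<in> E)" for E
  have T: "finite T" "T \<subseteq> D"
    using supp block_of_in[OF fp] unfolding T_def by auto
  have c: "c (block_of D x) = f x" for x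
  proof -
    have "(SOME y. y \<in> block_of D x) \<in> block_of D x"
      using mem_block_of[OF fp] by (rule someI)
    then show ?thesis
      using bc block_of_in[OF fp] mem_block_of[OF fp]
      unfolding c_def block_constant_def by blast
  qed
  have "(\<Sum>E\<in>T. c E * cls E x) = f x" for x
  proof -
    have "(\<Sum>E\<in>T. c E * cls E x) = (\<Sum>E\<in>T. if E = block_of D x then c E else 0)"
    proof (rule sum.cong)
      fix E assume "E \<in> T"
      then have "x \<in> E \<longleftrightarrow> E = block_of D x"
        using T(2) block_of_eq[OF fp] mem_block_of[OF fp] by blast
      then show "c E * cls E x = (if E = block_of D x then c E else 0)"
        unfolding cls_def by simp
    qed simp
    also have "\<dots> = (if block_of D x \<in> T then f x else 0)"
      by (simp add: sum.delta[OF T(1)] c)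
    also have "\<dots> = f x"
      unfolding T_def by auto
    finally show ?thesis .
  qed
  then have "f = (\<lambda>x. \<Sum>E\<in>T. c E * cls E x)" by auto
  with T show ?thesis
    unfolding lincomb_def by (intro CollectI exI[of _ T] exI[of _ c] conjI)
qed

lemma lincomb_eq:
  fixes D :: "rat set set"
  assumes "finite_partition D"
  shows "(lincomb D :: (rat \<Rightarrow> 'f::field) set) = {f. finite {x. f x \<noteq> 0} \<and> block_constant D f}"
  using lincomb_imp_block_constant[OF assms] lincomb_imp_finite_support[OF assms]
    lincomb_if_block_constant[OF assms] by blast

lemma schur_partitionD:
  assumes "schur_partition TYPE('f::field) D"
  shows schur_partition_finite_partition: "finite_partition D"
    and schur_partition_zero: "{0} \<in> D"
    and schur_partition_uminus: "C \<in> D \<Longrightarrow> uminus ` C \<in> D"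
    and schur_partition_conv: "C \<in> D \<Longrightarrow> C' \<in> D \<Longrightarrow> (conv (cls C) (cls C') :: rat \<Rightarrow> 'f) \<in> lincomb D"
proof -
  show "finite_partition D" "{0} \<in> D" "C \<in> D \<Longrightarrow> uminus ` C \<in> D"
    using assms unfolding schur_partition_def by blast+
  assume "C \<in> D" "C' \<in> D"
  then obtain T and lam :: "rat set \<Rightarrow> 'f" where "finite T" "T \<subseteq> D"
      "conv (cls C) (cls C') = (\<lambda>x. \<Sum>E\<in>T. lam E * cls E x)"
    using assms unfolding schur_partition_def by meson
  then show "(conv (cls C) (cls C') :: rat \<Rightarrow> 'f) \<in> lincomb D"
    unfolding lincomb_def by (intro CollectI exI[of _ T] exI[of _ lam] conjI)
qed

lemma cls_in_lincomb: "E \<in> D \<Longrightarrow> (cls E :: rat \<Rightarrow> 'f::field) \<in> lincomb D"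
  unfolding lincomb_def by (intro CollectI exI[of _ "{E}"] exI[of _ "\<lambda>_. 1"]) simp

lemma block_of_zero:
  assumes "schur_partition TYPE('f::field) D"
  shows "block_of D 0 = {0}"
  using block_of_eq[OF schur_partition_finite_partition[OF assms] schur_partition_zero[OF assms]]
  by simp

lemma conv_cls: "conv (cls C) g x = (\<Sum>y\<in>C. g (x - y))"
proof -
  have "{y. (cls C y :: 'f::field) \<noteq> 0} = C" by (auto simp: cls_def)
  then show ?thesis unfolding conv_def by (auto simp: cls_def intro: sum.cong)
qed

lemma block_constant_conv_cls:
  fixes g :: "rat \<Rightarrow> 'f::field"
  assumes schur: "schur_partition TYPE('f) D" and C: "C \<in> D" and g: "g \<in> lincomb D"
  shows "block_constant D (conv (cls C) g)"
proof -
  have fp: "finite_partition D" using schur_partition_finite_partition[OF schur] .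
  obtain T c where T: "T \<subseteq> D" and g_eq: "g = (\<lambda>x. \<Sum>E\<in>T. c E * cls E x)"
    using g unfolding lincomb_def by blast
  have "conv (cls C) g = (\<lambda>x. \<Sum>E\<in>T. c E * conv (cls C) (cls E :: rat \<Rightarrow> 'f) x)"
  proof
    fix x
    have "conv (cls C) g x = (\<Sum>y\<in>C. \<Sum>E\<in>T. c E * cls E (x - y))"
      unfolding conv_cls g_eq ..
    also have "\<dots> = (\<Sum>E\<in>T. c E * conv (cls C) (cls E :: rat \<Rightarrow> 'f) x)"
      unfolding conv_cls sum_distrib_left by (rule sum.swap)
    finally show "conv (cls C) g x = (\<Sum>E\<in>T. c E * conv (cls C) (cls E :: rat \<Rightarrow> 'f) x)" .
  qed
  moreover have "block_constant D (conv (cls C) (cls E :: rat \<Rightarrow> 'f))" if "E \<in> T" for E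
    using lincomb_imp_block_constant[OF fp schur_partition_conv[OF schur C]] that T by blast
  ultimately show ?thesis
    by (simp add: block_constant_sum)
qed

section \<open>Coefficients of powers of a class sum\<close>

text \<open>\<open>sum_reps C k x\<close> is the coefficient of \<open>x\<close> in the \<open>k\<close>-th power of the class sum of \<open>C\<close>.\<close>

definition sum_reps :: "'a::monoid_add set \<Rightarrow> nat \<Rightarrow> 'a \<Rightarrow> nat" where
  "sum_reps C k x = card {xs. set xs \<subseteq> C \<and> length xs = k \<and> sum_list xs = x}"

lemma finite_lists_with_sum:
  "finite C \<Longrightarrow> finite {xs. set xs \<subseteq> C \<and> length xs = k \<and> sum_list xs = x}"
  by (rule finite_subset[OF _ finite_lists_length_eq[of C k]]) auto

lemma sum_reps_0: "sum_reps C 0 x = (if x = 0 then 1 else 0)"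
proof -
  have "{xs. set xs \<subseteq> C \<and> length xs = 0 \<and> sum_list xs = x} = (if x = 0 then {[]} else {})"
    by auto
  then show ?thesis unfolding sum_reps_def by simp
qed

lemma sum_reps_Suc:
  fixes C :: "'a::ab_group_add set"
  assumes "finite C"
  shows "sum_reps C (Suc k) x = (\<Sum>c\<in>C. sum_reps C k (x - c))"
proof -
  let ?A = "\<lambda>c. {xs. set xs \<subseteq> C \<and> length xs = k \<and> sum_list xs = x - c}"
  have "{xs. set xs \<subseteq> C \<and> length xs = Suc k \<and> sum_list xs = x} = (\<Union>c\<in>C. (Cons c) ` ?A c)"
    by (auto simp: length_Suc_conv algebra_simps)
  then have "sum_reps C (Suc k) x = card (\<Union>c\<in>C. (Cons c) ` ?A c)"
    unfolding sum_reps_def by simp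
  also have "\<dots> = (\<Sum>c\<in>C. card ((Cons c) ` ?A c))"
    using assms finite_lists_with_sum[OF assms] by (intro card_UN_disjoint) auto
  also have "\<dots> = (\<Sum>c\<in>C. sum_reps C k (x - c))"
    unfolding sum_reps_def by (intro sum.cong refl card_image) (auto simp: inj_on_def)
  finally show ?thesis .
qed

lemma finite_sum_reps_support:
  assumes "finite C"
  shows "finite {x. sum_reps C k x \<noteq> 0}"
proof (rule finite_subset)
  show "{x. sum_reps C k x \<noteq> 0} \<subseteq> sum_list ` {xs. set xs \<subseteq> C \<and> length xs = k}"
  proof
    fix x assume "x \<in> {x. sum_reps C k x \<noteq> 0}"
    then have "{xs. set xs \<subseteq> C \<and> length xs = k \<and> sum_list xs = x} \<noteq> {}"
      unfolding sum_reps_def by (intro notI) simp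
    then show "x \<in> sum_list ` {xs. set xs \<subseteq> C \<and> length xs = k}" by blast
  qed
  show "finite (sum_list ` {xs. set xs \<subseteq> C \<and> length xs = k})"
    using finite_lists_length_eq[OF assms] by (rule finite_imageI)
qed

lemma sum_reps_Max:
  fixes C :: "'a::linordered_idom set"
  assumes "finite C" "C \<noteq> {}"
  shows "sum_reps C k (of_nat k * Max C) = 1"
proof -
  let ?m = "Max C"
  have "{xs. set xs \<subseteq> C \<and> length xs = k \<and> sum_list xs = of_nat k * ?m} = {replicate k ?m}"
  proof (intro set_eqI iffI)
    fix xs assume "xs \<in> {xs. set xs \<subseteq> C \<and> length xs = k \<and> sum_list xs = of_nat k * ?m}"
    then have xs: "set xs \<subseteq> C" "length xs = k" "sum_list xs = of_nat k * ?m" by auto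
    have sum0: "(\<Sum>y\<leftarrow>xs. ?m - y) = 0"
      using xs(2,3) by (simp add: sum_list_subtractf sum_list_triv)
    have "0 \<le> z" if "z \<in> set (map (\<lambda>y. ?m - y) xs)" for z
      using xs(1) that assms(1) by auto
    then have "\<forall>z\<in>set (map (\<lambda>y. ?m - y) xs). z = 0"
      using sum_list_nonneg_eq_0_iff sum0 by blast
    then have "\<forall>y\<in>set xs. y = ?m" by simp
    then show "xs \<in> {replicate k ?m}"
      using replicate_eqI[OF xs(2)] by simp
  qed (use Max_in[OF assms] in \<open>auto simp: sum_list_replicate\<close>)
  then show ?thesis unfolding sum_reps_def by simp
qed

lemma sum_reps_eq_1_imp:
  fixes C :: "'a::semiring_1 set"
  assumes "sum_reps C k x = 1" "k > 0"
  obtains c where "c \<in> C" "x = of_nat k * c"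
proof -
  let ?A = "{xs. set xs \<subseteq> C \<and> length xs = k \<and> sum_list xs = x}"
  obtain xs where A: "?A = {xs}"
    using assms(1) unfolding sum_reps_def by (rule card_1_singletonE)
  then have xs: "set xs \<subseteq> C" "length xs = k" "sum_list xs = x" by auto
  have "sum_list (rotate1 xs) = sum_list xs"
    by (cases xs) (simp_all add: add.commute)
  then have "rotate1 xs \<in> ?A" using xs by simp
  then have "rotate1 xs = xs" using A by blast
  moreover have "xs \<noteq> []" using xs(2) assms(2) by auto
  ultimately obtain c where c: "set xs = {c}"
    using rotate1_fixpoint_card card_1_singletonE by metis
  then have "xs = replicate k c" using replicate_eqI[OF xs(2)] by simp
  then show thesis using that c xs by (simp add: sum_list_replicate)
qed

lemma conv_cls_sum_reps:
  assumes "finite C"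
  shows "conv (cls C) (\<lambda>x. of_nat (sum_reps C k x) :: 'f::field) = (\<lambda>x. of_nat (sum_reps C (Suc k) x))"
  by (rule ext) (simp add: conv_cls sum_reps_Suc[OF assms])

lemma sum_reps_in_lincomb:
  assumes schur: "schur_partition TYPE('f::field) D" and C: "C \<in> D"
  shows "(\<lambda>x. of_nat (sum_reps C k x) :: 'f) \<in> lincomb D"
proof (induction k)
  case 0
  have "(\<lambda>x. of_nat (sum_reps C 0 x) :: 'f) = cls {0}"
    by (auto simp: sum_reps_0 cls_def)
  then show ?case using cls_in_lincomb[OF schur_partition_zero[OF schur]] by simp
next
  case (Suc k)
  have fp: "finite_partition D" using schur_partition_finite_partition[OF schur] .
  have fC: "finite C" using finite_partitionD(1)[OF fp C] .
  have "finite {x. (of_nat (sum_reps C (Suc k) x) :: 'f) \<noteq> 0}"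
    by (rule finite_subset[OF _ finite_sum_reps_support[OF fC, of "Suc k"]]) (auto intro!: gr0I)
  moreover have "block_constant D (\<lambda>x. of_nat (sum_reps C (Suc k) x) :: 'f)"
    using block_constant_conv_cls[OF schur C Suc] by (simp add: conv_cls_sum_reps[OF fC])
  ultimately show ?case by (rule lincomb_if_block_constant[OF fp])
qed

lemma sum_reps_block_constant:
  assumes "schur_partition TYPE('f::field_char_0) D" "C \<in> D"
  shows "block_constant D (sum_reps C k)"
proof -
  have "block_constant D (\<lambda>x. of_nat (sum_reps C k x) :: 'f)"
    by (rule lincomb_imp_block_constant[OF schur_partition_finite_partition[OF assms(1)]
          sum_reps_in_lincomb[OF assms]])
  then show ?thesis
    unfolding block_constant_def of_nat_eq_iff .
qed

lemma block_constant_sum_reps_sum_diff: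
  assumes schur: "schur_partition TYPE('f::field_char_0) D" and B: "B \<in> D" and E: "E \<in> D"
  shows "block_constant D (\<lambda>c. \<Sum>e\<in>E. sum_reps B j (e - c))"
proof -
  let ?g = "conv (cls (uminus ` E)) (\<lambda>x. of_nat (sum_reps B j x) :: 'f)"
  have g: "?g (- c) = of_nat (\<Sum>e\<in>E. sum_reps B j (e - c))" for c
  proof -
    have "?g (- c) = (\<Sum>y\<in>uminus ` E. of_nat (sum_reps B j (- c - y)))"
      by (rule conv_cls)
    also have "\<dots> = (\<Sum>e\<in>E. of_nat (sum_reps B j (e - c)))"
      by (subst sum.reindex) (auto simp: inj_on_def)
    finally show ?thesis by simp
  qed
  have "block_constant D ?g"
    by (rule block_constant_conv_cls[OF schur schur_partition_uminus[OF schur E]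
          sum_reps_in_lincomb[OF schur B]])
  then have "?g (- x) = ?g (- y)" if "C \<in> D" "x \<in> C" "y \<in> C" for C x y
    using schur_partition_uminus[OF schur that(1)] that(2,3)
    unfolding block_constant_def by blast
  then show ?thesis
    unfolding block_constant_def g of_nat_eq_iff by blast
qed

lemma sum_reps_on_block_of_Max_multiple:
  assumes schur: "schur_partition TYPE('f::field_char_0) D" and C: "C \<in> D"
    and e: "e \<in> block_of D (of_nat k * Max C)"
  shows "sum_reps C k e = 1"
proof -
  have fp: "finite_partition D" by (rule schur_partition_finite_partition[OF schur])
  have "sum_reps C k e = sum_reps C k (of_nat k * Max C)"
    using sum_reps_block_constant[OF schur C, of k] block_of_in[OF fp] mem_block_of[OF fp] e
    unfolding block_constant_def by blast
  then show ?thesis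
    using sum_reps_Max finite_partitionD[OF fp C] by simp
qed

lemma block_of_Max_multiple_subset:
  assumes schur: "schur_partition TYPE('f::field_char_0) D" and C: "C \<in> D" and k: "k > 0"
  shows "block_of D (of_nat k * Max C) \<subseteq> (\<lambda>c. of_nat k * c) ` C"
proof
  fix e assume "e \<in> block_of D (of_nat k * Max C)"
  then have "sum_reps C k e = 1" by (rule sum_reps_on_block_of_Max_multiple[OF schur C])
  then obtain c where "c \<in> C" "e = of_nat k * c" using k by (rule sum_reps_eq_1_imp)
  then show "e \<in> (\<lambda>c. of_nat k * c) ` C" by blast
qed

lemma card_le_block_of_Max_multiple:
  assumes schur: "schur_partition TYPE('f::field_char_0) D" and C: "C \<in> D" and k: "k > 0"
  shows "card C \<le> card (block_of D (of_nat k * Max C))"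
proof -
  have fp: "finite_partition D" by (rule schur_partition_finite_partition[OF schur])
  have fC: "finite C" and mC: "Max C \<in> C"
    using finite_partitionD[OF fp C] by auto
  obtain j where kj: "k = Suc j" using k gr0_implies_Suc by blast
  define m where "m = Max C"
  define E where "E = block_of D (of_nat k * m)"
  have E: "E \<in> D" "of_nat k * m \<in> E" "finite E"
    unfolding E_def using block_of_in[OF fp] mem_block_of[OF fp] finite_partitionD(1)[OF fp]
    by auto
  define G where "G c = (\<Sum>e\<in>E. sum_reps C j (e - c))" for c
  have G_const: "G c = G m" if "c \<in> C" for c
    using block_constant_sum_reps_sum_diff[OF schur C E(1), of j] C that mC
    unfolding G_def m_def block_constant_def by blast
  have "card E = (\<Sum>e\<in>E. sum_reps C k e)"
    using sum_reps_on_block_of_Max_multiple[OF schur C] unfolding E_def m_def by simp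
  also have "\<dots> = (\<Sum>c\<in>C. G c)"
    unfolding kj G_def sum_reps_Suc[OF fC] by (rule sum.swap)
  also have "\<dots> = card C * G m"
    using G_const by simp
  finally have card_E: "card E = card C * G m" .
  have "1 = sum_reps C j (of_nat k * m - m)"
    using sum_reps_Max[OF finite_partitionD[OF fp C], of j] unfolding kj m_def
    by (simp add: algebra_simps)
  also have "\<dots> \<le> G m"
    unfolding G_def using E by (intro member_le_sum) auto
  finally show ?thesis
    using card_E unfolding E_def m_def by simp
qed

section \<open>Multipliers\<close>

definition multiplier :: "rat set set \<Rightarrow> rat \<Rightarrow> bool" where
  "multiplier D q \<longleftrightarrow> (\<forall>C\<in>D. (\<lambda>x. q * x) ` C \<in> D)"

lemma multiplier_of_nat:
  assumes schur: "schur_partition TYPE('f::field_char_0) D" and k: "k > 0"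
  shows "multiplier D (of_nat k)"
  unfolding multiplier_def
proof
  fix C assume C: "C \<in> D"
  have fp: "finite_partition D" by (rule schur_partition_finite_partition[OF schur])
  have "block_of D (of_nat k * Max C) = (\<lambda>c. of_nat k * c) ` C"
  proof (rule card_seteq)
    show "finite ((\<lambda>c. of_nat k * c) ` C)"
      using finite_partitionD(1)[OF fp C] by simp
    show "block_of D (of_nat k * Max C) \<subseteq> (\<lambda>c. of_nat k * c) ` C"
      by (rule block_of_Max_multiple_subset[OF schur C k])
    have "card ((\<lambda>c. of_nat k * c :: rat) ` C) = card C"
      using k by (intro card_image) (simp add: inj_on_def)
    then show "card ((\<lambda>c. of_nat k * c) ` C) \<le> card (block_of D (of_nat k * Max C))"
      using card_le_block_of_Max_multiple[OF schur C k] by simp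
  qed
  then show "(\<lambda>c. of_nat k * c) ` C \<in> D"
    using block_of_in[OF fp] by metis
qed

lemma multiplier_minus_one:
  assumes "schur_partition TYPE('f::field) D"
  shows "multiplier D (- 1)"
  using schur_partition_uminus[OF assms] unfolding multiplier_def by simp

lemma multiplier_mult:
  assumes "multiplier D a" "multiplier D b"
  shows "multiplier D (a * b)"
proof -
  have "(\<lambda>x. a * b * x) ` C = (\<lambda>x. a * x) ` (\<lambda>x. b * x) ` C" for C
    by (simp add: image_image mult.assoc)
  then show ?thesis using assms unfolding multiplier_def by simp
qed

lemma multiplier_inverse:
  assumes fp: "finite_partition D" and a: "multiplier D a" "a \<noteq> 0"
  shows "multiplier D (inverse a)"
  unfolding multiplier_def
proof
  fix C assume C: "C \<in> D"
  then obtain x where x: "x \<in> C" using finite_partitionD(2)[OF fp] by blast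
  let ?C' = "block_of D (inverse a * x)"
  have "(\<lambda>y. a * y) ` ?C' \<in> D"
    using a(1) block_of_in[OF fp] unfolding multiplier_def by blast
  moreover have "x \<in> (\<lambda>y. a * y) ` ?C'"
    by (rule image_eqI[where x = "inverse a * x"]) (simp_all add: a(2) mem_block_of[OF fp])
  ultimately have "(\<lambda>y. a * y) ` ?C' = C"
    using finite_partition_block_eq[OF fp _ C _ x] by blast
  moreover have "(\<lambda>y. inverse a * y) ` (\<lambda>y. a * y) ` ?C' = ?C'"
    using a(2) by (simp add: image_image mult.assoc[symmetric])
  ultimately have "(\<lambda>y. inverse a * y) ` C = ?C'"
    by simp
  then show "(\<lambda>y. inverse a * y) ` C \<in> D"
    using block_of_in[OF fp] by simp
qed

lemma multiplier_nonzero: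
  assumes schur: "schur_partition TYPE('f::field_char_0) D" and q: "q \<noteq> 0"
  shows "multiplier D q"
proof -
  have int: "multiplier D (of_int n)" if "n \<noteq> 0" for n
  proof (cases "n > 0")
    case True
    then show ?thesis using multiplier_of_nat[OF schur, of "nat n"] by simp
  next
    case False
    have "multiplier D (- 1 * of_nat (nat (- n)))"
      by (rule multiplier_mult[OF multiplier_minus_one[OF schur] multiplier_of_nat[OF schur]])
        (use False that in simp)
    moreover have "- 1 * of_nat (nat (- n)) = (of_int n :: rat)"
      using False by simp
    ultimately show ?thesis by simp
  qed
  obtain a b where q_eq: "q = of_int a * inverse (of_int b)" and "b > 0" "a \<noteq> 0"
    using q by (cases q rule: Rat_cases_nonzero) (auto simp: Fract_of_int_quotient divide_inverse)
  then show ?thesis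
    using multiplier_mult[OF int multiplier_inverse[OF schur_partition_finite_partition[OF schur] int]]
    by simp
qed

lemma abs_eq_1_if_finite_powers:
  fixes q :: "'a::linordered_field"
  assumes "q \<noteq> 0" "finite (range (\<lambda>n::nat. q ^ n))"
  shows "\<bar>q\<bar> = 1"
proof (rule ccontr)
  assume "\<bar>q\<bar> \<noteq> 1"
  have "inj (\<lambda>n::nat. q ^ n)"
  proof (rule injI)
    fix m n :: nat assume "q ^ m = q ^ n"
    then have "\<bar>q\<bar> ^ m = \<bar>q\<bar> ^ n" by (simp add: power_abs[symmetric])
    then show "m = n"
      using power_inject_exp'[OF \<open>\<bar>q\<bar> \<noteq> 1\<close>] assms(1) by simp
  qed
  then show False
    using assms(2) finite_imageD infinite_UNIV_nat by blast
qed

lemma block_of_one_subset: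
  assumes schur: "schur_partition TYPE('f::field_char_0) D"
  shows "block_of D 1 \<subseteq> {1, - 1}"
proof
  let ?B = "block_of D 1"
  have fp: "finite_partition D" by (rule schur_partition_finite_partition[OF schur])
  have B: "?B \<in> D" "1 \<in> ?B" "finite ?B"
    using block_of_in[OF fp] mem_block_of[OF fp] finite_partitionD(1)[OF fp] by auto
  fix q assume q: "q \<in> ?B"
  have "q \<noteq> 0"
  proof
    assume "q = 0"
    then have "?B = {0}" using block_of_eq[OF fp B(1) q] block_of_zero[OF schur] by simp
    then show False using B(2) by simp
  qed
  then have "(\<lambda>x. q * x) ` ?B \<in> D"
    using multiplier_nonzero[OF schur] B(1) unfolding multiplier_def by blast
  moreover have "q \<in> (\<lambda>x. q * x) ` ?B"
    using B(2) by force
  ultimately have qB: "(\<lambda>x. q * x) ` ?B = ?B"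
    using finite_partition_block_eq[OF fp _ B(1) _ q] by blast
  have "q ^ n \<in> ?B" for n
  proof (induction n)
    case (Suc n)
    then have "q * q ^ n \<in> (\<lambda>x. q * x) ` ?B" by blast
    then show ?case using qB by simp
  qed (use B in simp)
  then have "finite (range (\<lambda>n. q ^ n))"
    using finite_subset[OF _ B(3)] by blast
  then have "\<bar>q\<bar> = 1"
    by (rule abs_eq_1_if_finite_powers[OF \<open>q \<noteq> 0\<close>])
  then show "q \<in> {1, - 1}"
    by (auto simp: abs_if split: if_splits)
qed

lemma block_of_eq_scaled_block_of_one:
  assumes schur: "schur_partition TYPE('f::field_char_0) D"
  shows "block_of D x = (\<lambda>y. x * y) ` block_of D 1"
proof (cases "x = 0")
  case True
  have "block_of D 1 \<noteq> {}"
    using mem_block_of[OF schur_partition_finite_partition[OF schur]] by blast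
  then show ?thesis
    using True block_of_zero[OF schur] by auto
next
  case False
  have fp: "finite_partition D" by (rule schur_partition_finite_partition[OF schur])
  have "(\<lambda>y. x * y) ` block_of D 1 \<in> D"
    using multiplier_nonzero[OF schur False] block_of_in[OF fp] unfolding multiplier_def by blast
  moreover have "x \<in> (\<lambda>y. x * y) ` block_of D 1"
    using mem_block_of[OF fp, of 1] by force
  ultimately show ?thesis
    by (rule block_of_eq[OF fp])
qed

lemma schur_partition_eq_range_scaled_block_of_one:
  assumes schur: "schur_partition TYPE('f::field_char_0) D"
  shows "D = range (\<lambda>x. (\<lambda>y. x * y) ` block_of D 1)"
proof -
  have "D = range (block_of D)"
    by (rule finite_partition_eq_range_block_of[OF schur_partition_finite_partition[OF schur]])
  also have "block_of D = (\<lambda>x. (\<lambda>y. x * y) ` block_of D 1)"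
    by (rule ext) (rule block_of_eq_scaled_block_of_one[OF schur])
  finally show ?thesis .
qed

theorem corollary4p2:
  fixes S :: "(rat \<Rightarrow> 'f::field_char_0) set"
  assumes "schur_ring S"
  shows "S = group_ring \<or> S = sym_schur_ring"
proof -
  obtain D where schur: "schur_partition TYPE('f) D" and S: "S = lincomb D"
    using assms unfolding schur_ring_def by blast
  have fp: "finite_partition D" by (rule schur_partition_finite_partition[OF schur])
  define B where "B = block_of D 1"
  have D: "D = range (\<lambda>x. (\<lambda>y. x * y) ` B)"
    unfolding B_def by (rule schur_partition_eq_range_scaled_block_of_one[OF schur])
  have "B = {1} \<or> B = {1, - 1}"
    using block_of_one_subset[OF schur] mem_block_of[OF fp, of 1] unfolding B_def by auto
  then show ?thesis
  proof
    assume "B = {1}"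
    then have "D = range (\<lambda>x. {x})" using D by simp
    then have "lincomb D = (group_ring :: (rat \<Rightarrow> 'f) set)"
      unfolding lincomb_eq[OF fp] group_ring_def block_constant_def by auto
    then show ?thesis using S by simp
  next
    assume "B = {1, - 1}"
    then have "D = {{g, - g} | g. True}" using D by auto
    then show ?thesis using S unfolding sym_schur_ring_def by simp
  qed
qed

end
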